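(* Let $\mathbb{E}$ be a finitely complete category, $\Sigma$ a fibrational class of split epimorphisms, and suppose $\mathbb{E}$ is a $\Sigma$-Mal'tsev category. Let $R$ be a reflexive relation and $S$ a $\Sigma$-relation on an object $X$ such that $[R,S]=0$. If $R'$ is a reflexive relation on $X$ with $R'\subseteq R$, then $[R',S]=0$.
   Context: A split epimorphism is a pair $(f,s)$ with $fs=1$. A class $\Sigma$ of split epimorphisms is fibrational if it contains all split epimorphisms $(f,s)$ with $f$ invertible and is stable under pullback along any morphism. A pair of morphisms with common codomain $Z$ is jointly extremally epic if it factors jointly through no non-invertible monomorphism into $Z$. $\mathbb{E}$ is $\Sigma$-Mal'tsev if for every split epimorphism $(f,s)\colon X\rightleftarrows Y$ in $\Sigma$ and every split epimorphism $(g,t)$ with $g\colon Y'\to Y$, letting $X'=Y'\times_YX$, $s'=(1_{Y'},sg)$, $\bar t=(tf,1_X)$, the pair $(s',\bar t)$ is jointly extremally epic. A $\Sigma$-relation is a reflexive relation $(d_0,d_1)\colon S\rightarrowtail X\times X$ with reflexivity $s_0$ such that $(d_0,s_0)\in\Sigma$. For reflexive relations $R,S$ on $X$, $R\times_XS$ is the pullback of $d_0^S$ along $d_1^R$ (elements $xRySz$), $\sigma_0^R\colon R\to R\times_XS$, $xRy\mapsto xRySy$, and $\sigma_0^S\colon S\to R\times_XS$, $ySz\mapsto yRySz$. $[R,S]=0$ means there is a morphism $p\colon R\times_XS\to X$ with $p\sigma_0^R=d_0^R$ and $p\sigma_0^S=d_1^S$. *)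

theory Defs
  imports Main
begin

text \<open>A (possibly large) category, presented by its objects, arrows, source, target,
  identities and composition; comp C g f denotes g after f.\<close>

record ('o, 'a) cat =
  obj :: "'o set"
  arr :: "'a set"
  src :: "'a \<Rightarrow> 'o"
  tgt :: "'a \<Rightarrow> 'o"
  ident :: "'o \<Rightarrow> 'a"
  comp :: "'a \<Rightarrow> 'a \<Rightarrow> 'a"

definition hom :: "('o, 'a) cat \<Rightarrow> 'a \<Rightarrow> 'o \<Rightarrow> 'o \<Rightarrow> bool" where
  "hom C f X Y \<longleftrightarrow> f \<in> arr C \<and> src C f = X \<and> tgt C f = Y"

definition category :: "('o, 'a) cat \<Rightarrow> bool" where
  "category C \<longleftrightarrow>
     (\<forall>f\<in>arr C. src C f \<in> obj C \<and> tgt C f \<in> obj C) \<and>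
     (\<forall>X\<in>obj C. hom C (ident C X) X X) \<and>
     (\<forall>f\<in>arr C. \<forall>g\<in>arr C. tgt C f = src C g \<longrightarrow>
         hom C (comp C g f) (src C f) (tgt C g)) \<and>
     (\<forall>f\<in>arr C. \<forall>g\<in>arr C. \<forall>h\<in>arr C. tgt C f = src C g \<and> tgt C g = src C h \<longrightarrow>
         comp C h (comp C g f) = comp C (comp C h g) f) \<and>
     (\<forall>f\<in>arr C. comp C f (ident C (src C f)) = f \<and> comp C (ident C (tgt C f)) f = f)"

definition mono :: "('o, 'a) cat \<Rightarrow> 'a \<Rightarrow> bool" where
  "mono C m \<longleftrightarrow> m \<in> arr C \<and>
     (\<forall>a b T. hom C a T (src C m) \<and> hom C b T (src C m) \<and> comp C m a = comp C m b \<longrightarrow> a = b)"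

definition iso :: "('o, 'a) cat \<Rightarrow> 'a \<Rightarrow> bool" where
  "iso C f \<longleftrightarrow> f \<in> arr C \<and>
     (\<exists>g. hom C g (tgt C f) (src C f) \<and> comp C g f = ident C (src C f) \<and>
          comp C f g = ident C (tgt C f))"

definition is_pullback :: "('o, 'a) cat \<Rightarrow> 'a \<Rightarrow> 'a \<Rightarrow> 'a \<Rightarrow> 'a \<Rightarrow> bool" where
  "is_pullback C f g p q \<longleftrightarrow>
     f \<in> arr C \<and> g \<in> arr C \<and> tgt C f = tgt C g \<and>
     hom C p (src C p) (src C f) \<and> hom C q (src C p) (src C g) \<and>
     comp C f p = comp C g q \<and>
     (\<forall>T x y. hom C x T (src C f) \<and> hom C y T (src C g) \<and> comp C f x = comp C g y \<longrightarrow>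
        (\<exists>u. hom C u T (src C p) \<and> comp C p u = x \<and> comp C q u = y \<and>
             (\<forall>v. hom C v T (src C p) \<and> comp C p v = x \<and> comp C q v = y \<longrightarrow> v = u)))"

definition terminal :: "('o, 'a) cat \<Rightarrow> 'o \<Rightarrow> bool" where
  "terminal C T \<longleftrightarrow> T \<in> obj C \<and>
     (\<forall>X\<in>obj C. \<exists>f. hom C f X T \<and> (\<forall>g. hom C g X T \<longrightarrow> g = f))"

definition finitely_complete :: "('o, 'a) cat \<Rightarrow> bool" where
  "finitely_complete C \<longleftrightarrow> (\<exists>T. terminal C T) \<and>
     (\<forall>f g. f \<in> arr C \<and> g \<in> arr C \<and> tgt C f = tgt C g \<longrightarrow>
        (\<exists>p q. is_pullback C f g p q))"

definition split_epi :: "('o, 'a) cat \<Rightarrow> 'a \<Rightarrow> 'a \<Rightarrow> bool" where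
  "split_epi C f s \<longleftrightarrow> f \<in> arr C \<and> hom C s (tgt C f) (src C f) \<and>
     comp C f s = ident C (tgt C f)"

definition fibrational :: "('o, 'a) cat \<Rightarrow> ('a \<times> 'a) set \<Rightarrow> bool" where
  "fibrational C \<Sigma> \<longleftrightarrow>
     (\<forall>(f, s)\<in>\<Sigma>. split_epi C f s) \<and>
     (\<forall>f s. split_epi C f s \<and> iso C f \<longrightarrow> (f, s) \<in> \<Sigma>) \<and>
     (\<forall>f s h h' f' s'. (f, s) \<in> \<Sigma> \<and> h \<in> arr C \<and> tgt C h = tgt C f \<and>
         is_pullback C f h h' f' \<and> hom C s' (src C h) (src C f') \<and>
         comp C f' s' = ident C (src C h) \<and> comp C h' s' = comp C s h \<longrightarrow> (f', s') \<in> \<Sigma>)"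

definition jointly_extremally_epic :: "('o, 'a) cat \<Rightarrow> 'a \<Rightarrow> 'a \<Rightarrow> bool" where
  "jointly_extremally_epic C a b \<longleftrightarrow>
     (\<forall>m u v. mono C m \<and> tgt C m = tgt C a \<and>
        hom C u (src C a) (src C m) \<and> hom C v (src C b) (src C m) \<and>
        comp C m u = a \<and> comp C m v = b \<longrightarrow> iso C m)"

text \<open>\<Sigma>-Mal'tsev: for (f,s) : X \<rightleftharpoons> Y in \<Sigma>, a split epi (g,t) with g : Y' \<rightarrow> Y,
  a pullback X' with projections p1 : X' \<rightarrow> Y', p2 : X' \<rightarrow> X (g p1 = f p2),
  s' = (1, s g) and tb = (t f, 1), the pair (s', tb) is jointly extremally epic.\<close>
definition sigma_maltsev :: "('o, 'a) cat \<Rightarrow> ('a \<times> 'a) set \<Rightarrow> bool" where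
  "sigma_maltsev C \<Sigma> \<longleftrightarrow>
     (\<forall>f s g t p1 p2 s' tb. (f, s) \<in> \<Sigma> \<and> split_epi C g t \<and> tgt C g = tgt C f \<and>
        is_pullback C g f p1 p2 \<and>
        hom C s' (src C g) (src C p1) \<and> comp C p1 s' = ident C (src C g) \<and>
        comp C p2 s' = comp C s g \<and>
        hom C tb (src C f) (src C p1) \<and> comp C p1 tb = comp C t f \<and>
        comp C p2 tb = ident C (src C f) \<longrightarrow>
        jointly_extremally_epic C s' tb)"

text \<open>(d0,d1) jointly monic, i.e. \<langle>d0,d1\<rangle> : S \<rightarrow> X \<times> X is a monomorphism.\<close>
definition jointly_monic :: "('o, 'a) cat \<Rightarrow> 'a \<Rightarrow> 'a \<Rightarrow> bool" where
  "jointly_monic C d0 d1 \<longleftrightarrow>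
     (\<forall>a b T. hom C a T (src C d0) \<and> hom C b T (src C d0) \<and>
        comp C d0 a = comp C d0 b \<and> comp C d1 a = comp C d1 b \<longrightarrow> a = b)"

definition refl_rel :: "('o, 'a) cat \<Rightarrow> 'o \<Rightarrow> 'a \<Rightarrow> 'a \<Rightarrow> 'a \<Rightarrow> bool" where
  "refl_rel C X d0 d1 s0 \<longleftrightarrow>
     hom C d0 (src C d0) X \<and> hom C d1 (src C d0) X \<and> hom C s0 X (src C d0) \<and>
     comp C d0 s0 = ident C X \<and> comp C d1 s0 = ident C X \<and> jointly_monic C d0 d1"

definition sigma_rel :: "('o, 'a) cat \<Rightarrow> ('a \<times> 'a) set \<Rightarrow> 'o \<Rightarrow> 'a \<Rightarrow> 'a \<Rightarrow> 'a \<Rightarrow> bool" where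
  "sigma_rel C \<Sigma> X d0 d1 s0 \<longleftrightarrow> refl_rel C X d0 d1 s0 \<and> (d0, s0) \<in> \<Sigma>"

text \<open>R' \<subseteq> R as subobjects of X \<times> X.\<close>
definition subrel :: "('o, 'a) cat \<Rightarrow> 'a \<Rightarrow> 'a \<Rightarrow> 'a \<Rightarrow> 'a \<Rightarrow> bool" where
  "subrel C d0' d1' d0 d1 \<longleftrightarrow>
     (\<exists>k. hom C k (src C d0') (src C d0) \<and> comp C d0 k = d0' \<and> comp C d1 k = d1')"

text \<open>[R,S] = 0 for R = (r0,r1,rs), S = (t0,t1,ts): for the pullback R \<times>_X S of t0 along r1
  (projections q1 to R, q2 to S) with \<sigma>R = (1_R, ts r1) and \<sigma>S = (rs t0, 1_S),
  there is p : R \<times>_X S \<rightarrow> X with p \<sigma>R = r0 and p \<sigma>S = t1.\<close>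
definition commutator_trivial ::
  "('o, 'a) cat \<Rightarrow> 'o \<Rightarrow> 'a \<Rightarrow> 'a \<Rightarrow> 'a \<Rightarrow> 'a \<Rightarrow> 'a \<Rightarrow> 'a \<Rightarrow> bool" where
  "commutator_trivial C X r0 r1 rs t0 t1 ts \<longleftrightarrow>
     (\<forall>q1 q2 \<sigma>R \<sigma>S. is_pullback C r1 t0 q1 q2 \<and>
        hom C \<sigma>R (src C r0) (src C q1) \<and> comp C q1 \<sigma>R = ident C (src C r0) \<and>
        comp C q2 \<sigma>R = comp C ts r1 \<and>
        hom C \<sigma>S (src C t0) (src C q1) \<and> comp C q1 \<sigma>S = comp C rs t0 \<and>
        comp C q2 \<sigma>S = ident C (src C t0) \<longrightarrow>
        (\<exists>p. hom C p (src C q1) X \<and> comp C p \<sigma>R = r0 \<and> comp C p \<sigma>S = t1))"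

end

theory Submission
  imports Defs
begin

text \<open>If R' \<subseteq> R via k : R' \<rightarrow> R, then k \<times>_X 1_S : R' \<times>_X S \<rightarrow> R \<times>_X S carries the two
  canonical sections of R' \<times>_X S to those of R \<times>_X S (for the section of S this uses
  k rs' = rs, which holds because \<langle>r0,r1\<rangle> is monic).  Hence composing a connector
  p for R and S with k \<times>_X 1_S gives a connector for R' and S.\<close>

lemma cat_comp_hom:
  "category C \<Longrightarrow> hom C f A B \<Longrightarrow> hom C g B D \<Longrightarrow> hom C (comp C g f) A D"
  unfolding category_def hom_def by metis

lemma cat_assoc:
  "category C \<Longrightarrow> hom C f A B \<Longrightarrow> hom C g B D \<Longrightarrow> hom C h D E \<Longrightarrow>
    comp C (comp C h g) f = comp C h (comp C g f)"
  unfolding category_def hom_def by metis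

lemma cat_ident_left: "category C \<Longrightarrow> hom C f A B \<Longrightarrow> comp C (ident C B) f = f"
  unfolding category_def hom_def by metis

lemma cat_ident_right: "category C \<Longrightarrow> hom C f A B \<Longrightarrow> comp C f (ident C A) = f"
  unfolding category_def hom_def by metis

lemma cat_hom_ident: "category C \<Longrightarrow> hom C f A B \<Longrightarrow> hom C (ident C A) A A"
  unfolding category_def hom_def by metis

lemma pullback_hom:
  assumes "is_pullback C f g p q"
  shows "hom C p (src C p) (src C f)" "hom C q (src C p) (src C g)"
    "comp C f p = comp C g q"
  using assms unfolding is_pullback_def by auto

lemma pullback_lift:
  assumes "is_pullback C f g p q" "hom C x T (src C f)" "hom C y T (src C g)"
    "comp C f x = comp C g y"
  obtains u where "hom C u T (src C p)" "comp C p u = x" "comp C q u = y"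
  using assms unfolding is_pullback_def by blast

lemma pullback_unique:
  assumes C: "category C" and pb: "is_pullback C f g p q"
    and v: "hom C v T (src C p)" and w: "hom C w T (src C p)"
    and "comp C p v = comp C p w" and "comp C q v = comp C q w"
  shows "v = w"
proof -
  have hp: "hom C p (src C p) (src C f)" and hq: "hom C q (src C p) (src C g)"
    and square: "comp C f p = comp C g q" using pullback_hom[OF pb] by auto
  have hf: "hom C f (src C f) (tgt C f)" and hg: "hom C g (src C g) (tgt C f)"
    using pb unfolding is_pullback_def hom_def by auto
  have "comp C f (comp C p v) = comp C g (comp C q v)"
    using cat_assoc[OF C v hp hf] cat_assoc[OF C v hq hg] square by simp
  with pb cat_comp_hom[OF C v hp] cat_comp_hom[OF C v hq] obtain u where
    "\<forall>z. hom C z T (src C p) \<and> comp C p z = comp C p v \<and> comp C q z = comp C q v \<longrightarrow> z = u"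
    unfolding is_pullback_def by blast
  then show ?thesis using assms(3-) by metis
qed

lemma subrel_comp_refl:
  assumes C: "category C" and R: "refl_rel C X r0 r1 rs" and R': "refl_rel C X r0' r1' rs'"
    and k: "hom C k (src C r0') (src C r0)" "comp C r0 k = r0'" "comp C r1 k = r1'"
  shows "comp C k rs' = rs"
proof -
  have r0: "hom C r0 (src C r0) X" and r1: "hom C r1 (src C r0) X"
    and rs: "hom C rs X (src C r0)" and rs': "hom C rs' X (src C r0')"
    using R R' unfolding refl_rel_def by auto
  have "comp C r0 (comp C k rs') = comp C r0 rs"
    using cat_assoc[OF C rs' k(1) r0] k R R' unfolding refl_rel_def by simp
  moreover have "comp C r1 (comp C k rs') = comp C r1 rs"
    using cat_assoc[OF C rs' k(1) r1] k R R' unfolding refl_rel_def by simp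
  ultimately show ?thesis
    using R cat_comp_hom[OF C rs' k(1)] rs r0
    unfolding refl_rel_def jointly_monic_def hom_def by blast
qed

lemma pullback_refl_sections:
  assumes C: "category C" and pb: "is_pullback C r1 t0 q1 q2"
    and r1: "hom C r1 R X" and t0: "hom C t0 S X"
    and rs: "hom C rs X R" and ts: "hom C ts X S"
    and r1rs: "comp C r1 rs = ident C X" and t0ts: "comp C t0 ts = ident C X"
  obtains \<sigma>R \<sigma>S where
    "hom C \<sigma>R R (src C q1)" "comp C q1 \<sigma>R = ident C R" "comp C q2 \<sigma>R = comp C ts r1"
    "hom C \<sigma>S S (src C q1)" "comp C q1 \<sigma>S = comp C rs t0" "comp C q2 \<sigma>S = ident C S"
proof -
  have src: "src C r1 = R" "src C t0 = S" using r1 t0 unfolding hom_def by auto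
  have "comp C r1 (ident C R) = comp C t0 (comp C ts r1)"
    using cat_ident_right[OF C r1] cat_assoc[OF C r1 ts t0] t0ts cat_ident_left[OF C r1] by simp
  then obtain \<sigma>R where "hom C \<sigma>R R (src C q1)" "comp C q1 \<sigma>R = ident C R"
      "comp C q2 \<sigma>R = comp C ts r1"
    using pullback_lift[OF pb] cat_hom_ident[OF C r1] cat_comp_hom[OF C r1 ts] src by metis
  moreover have "comp C r1 (comp C rs t0) = comp C t0 (ident C S)"
    using cat_ident_right[OF C t0] cat_assoc[OF C t0 rs r1] r1rs cat_ident_left[OF C t0] by simp
  then obtain \<sigma>S where "hom C \<sigma>S S (src C q1)" "comp C q1 \<sigma>S = comp C rs t0"
      "comp C q2 \<sigma>S = ident C S"
    using pullback_lift[OF pb] cat_hom_ident[OF C t0] cat_comp_hom[OF C t0 rs] src by metis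
  ultimately show ?thesis using that by blast
qed

lemma pullback_comparison_sections:
  assumes C: "category C"
    and pb: "is_pullback C r1 t0 q1 q2" and pb': "is_pullback C r1' t0 q1' q2'"
    and r1: "hom C r1 R X" and r1': "hom C r1' R' X" and t0: "hom C t0 S X"
    and ts: "hom C ts X S" and rs': "hom C rs' X R'"
    and k: "hom C k R' R" "comp C r1 k = r1'" and k_refl: "comp C k rs' = rs"
    and \<sigma>R: "hom C \<sigma>R R (src C q1)" "comp C q1 \<sigma>R = ident C R" "comp C q2 \<sigma>R = comp C ts r1"
    and \<sigma>S: "hom C \<sigma>S S (src C q1)" "comp C q1 \<sigma>S = comp C rs t0" "comp C q2 \<sigma>S = ident C S"
    and \<sigma>R': "hom C \<sigma>R' R' (src C q1')" "comp C q1' \<sigma>R' = ident C R'"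
      "comp C q2' \<sigma>R' = comp C ts r1'"
    and \<sigma>S': "hom C \<sigma>S' S (src C q1')" "comp C q1' \<sigma>S' = comp C rs' t0"
      "comp C q2' \<sigma>S' = ident C S"
  obtains K where "hom C K (src C q1') (src C q1)"
    "comp C K \<sigma>R' = comp C \<sigma>R k" "comp C K \<sigma>S' = \<sigma>S"
proof -
  have src: "src C r1 = R" "src C r1' = R'" "src C t0 = S"
    using r1 r1' t0 unfolding hom_def by auto
  have q1: "hom C q1 (src C q1) R" and q2: "hom C q2 (src C q1) S"
    using pullback_hom[OF pb] src by auto
  have q1': "hom C q1' (src C q1') R'" and q2': "hom C q2' (src C q1') S"
    and square': "comp C r1' q1' = comp C t0 q2'"
    using pullback_hom[OF pb'] src by auto
  have "comp C r1 (comp C k q1') = comp C t0 q2'"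
    using cat_assoc[OF C q1' k(1) r1] k(2) square' by simp
  then obtain K where K: "hom C K (src C q1') (src C q1)"
      and q1K: "comp C q1 K = comp C k q1'" and q2K: "comp C q2 K = q2'"
    using pullback_lift[OF pb] cat_comp_hom[OF C q1' k(1)] q2' src by metis
  have "comp C K \<sigma>R' = comp C \<sigma>R k"
  proof (rule pullback_unique[OF C pb])
    show "hom C (comp C K \<sigma>R') R' (src C q1)" using cat_comp_hom[OF C \<sigma>R'(1) K] .
    show "hom C (comp C \<sigma>R k) R' (src C q1)" using cat_comp_hom[OF C k(1) \<sigma>R(1)] .
    have "comp C q1 (comp C K \<sigma>R') = k"
      using cat_assoc[OF C \<sigma>R'(1) K q1, symmetric] q1K cat_assoc[OF C \<sigma>R'(1) q1' k(1)] \<sigma>R'(2)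
        cat_ident_right[OF C k(1)] by simp
    moreover have "comp C q1 (comp C \<sigma>R k) = k"
      using cat_assoc[OF C k(1) \<sigma>R(1) q1, symmetric] \<sigma>R(2) cat_ident_left[OF C k(1)] by simp
    ultimately show "comp C q1 (comp C K \<sigma>R') = comp C q1 (comp C \<sigma>R k)" by simp
    have "comp C q2 (comp C K \<sigma>R') = comp C ts r1'"
      using cat_assoc[OF C \<sigma>R'(1) K q2, symmetric] q2K \<sigma>R'(3) by simp
    moreover have "comp C q2 (comp C \<sigma>R k) = comp C ts r1'"
      using cat_assoc[OF C k(1) \<sigma>R(1) q2, symmetric] \<sigma>R(3) cat_assoc[OF C k(1) r1 ts] k(2)
      by simp
    ultimately show "comp C q2 (comp C K \<sigma>R') = comp C q2 (comp C \<sigma>R k)" by simp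
  qed
  moreover have "comp C K \<sigma>S' = \<sigma>S"
  proof (rule pullback_unique[OF C pb])
    show "hom C (comp C K \<sigma>S') S (src C q1)" using cat_comp_hom[OF C \<sigma>S'(1) K] .
    show "hom C \<sigma>S S (src C q1)" using \<sigma>S(1) .
    show "comp C q1 (comp C K \<sigma>S') = comp C q1 \<sigma>S"
      using cat_assoc[OF C \<sigma>S'(1) K q1, symmetric] q1K cat_assoc[OF C \<sigma>S'(1) q1' k(1)] \<sigma>S'(2)
        cat_assoc[OF C t0 rs' k(1), symmetric] k_refl \<sigma>S(2) by simp
    show "comp C q2 (comp C K \<sigma>S') = comp C q2 \<sigma>S"
      using cat_assoc[OF C \<sigma>S'(1) K q2, symmetric] q2K \<sigma>S'(3) \<sigma>S(3) by simp
  qed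
  ultimately show ?thesis using that K by blast
qed

theorem commutator_trivial_subrel:
  assumes C: "category C" and "finitely_complete C"
    and R: "refl_rel C X r0 r1 rs" and S: "refl_rel C X t0 t1 ts"
    and RS: "commutator_trivial C X r0 r1 rs t0 t1 ts"
    and R': "refl_rel C X r0' r1' rs'" and "subrel C r0' r1' r0 r1"
  shows "commutator_trivial C X r0' r1' rs' t0 t1 ts"
  unfolding commutator_trivial_def
proof (intro allI impI, elim conjE)
  fix q1' q2' \<sigma>R' \<sigma>S'
  assume pb': "is_pullback C r1' t0 q1' q2'" and \<sigma>R':
      "hom C \<sigma>R' (src C r0') (src C q1')" "comp C q1' \<sigma>R' = ident C (src C r0')"
      "comp C q2' \<sigma>R' = comp C ts r1'"
    and \<sigma>S': "hom C \<sigma>S' (src C t0) (src C q1')" "comp C q1' \<sigma>S' = comp C rs' t0"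
      "comp C q2' \<sigma>S' = ident C (src C t0)"
  have r0: "hom C r0 (src C r0) X" and r1: "hom C r1 (src C r0) X"
    and rs: "hom C rs X (src C r0)" and r1rs: "comp C r1 rs = ident C X"
    and r1': "hom C r1' (src C r0') X" and rs': "hom C rs' X (src C r0')"
    and t0: "hom C t0 (src C t0) X" and ts: "hom C ts X (src C t0)"
    and t0ts: "comp C t0 ts = ident C X"
    using R R' S unfolding refl_rel_def by auto
  obtain k where k: "hom C k (src C r0') (src C r0)" "comp C r0 k = r0'" "comp C r1 k = r1'"
    using \<open>subrel C r0' r1' r0 r1\<close> unfolding subrel_def hom_def using r0 r1' by auto
  obtain q1 q2 where pb: "is_pullback C r1 t0 q1 q2"
    using \<open>finitely_complete C\<close> r1 t0 unfolding finitely_complete_def hom_def by metis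
  obtain \<sigma>R \<sigma>S where \<sigma>R: "hom C \<sigma>R (src C r0) (src C q1)" "comp C q1 \<sigma>R = ident C (src C r0)"
      "comp C q2 \<sigma>R = comp C ts r1"
    and \<sigma>S: "hom C \<sigma>S (src C t0) (src C q1)" "comp C q1 \<sigma>S = comp C rs t0"
      "comp C q2 \<sigma>S = ident C (src C t0)"
    using pullback_refl_sections[OF C pb r1 t0 rs ts r1rs t0ts] .
  obtain p where p: "hom C p (src C q1) X" "comp C p \<sigma>R = r0" "comp C p \<sigma>S = t1"
    using RS pb \<sigma>R \<sigma>S unfolding commutator_trivial_def by blast
  obtain K where K: "hom C K (src C q1') (src C q1)"
      "comp C K \<sigma>R' = comp C \<sigma>R k" "comp C K \<sigma>S' = \<sigma>S"
    using pullback_comparison_sections[OF C pb pb' r1 r1' t0 ts rs' k(1,3)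
        subrel_comp_refl[OF C R R' k] \<sigma>R \<sigma>S \<sigma>R' \<sigma>S'] .
  have "comp C (comp C p K) \<sigma>R' = r0'"
    using cat_assoc[OF C \<sigma>R'(1) K(1) p(1)] K(2) cat_assoc[OF C k(1) \<sigma>R(1) p(1), symmetric]
      p(2) k(2) by simp
  moreover have "comp C (comp C p K) \<sigma>S' = t1"
    using cat_assoc[OF C \<sigma>S'(1) K(1) p(1)] K(3) p(3) by simp
  ultimately show "\<exists>p. hom C p (src C q1') X \<and> comp C p \<sigma>R' = r0' \<and> comp C p \<sigma>S' = t1"
    using cat_comp_hom[OF C K(1) p(1)] by blast
qed

theorem proposition3p9:
  fixes C :: "('o, 'a) cat" and \<Sigma> :: "('a \<times> 'a) set" and X :: 'o
    and r0 r1 rs t0 t1 ts r0' r1' rs' :: 'a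
  assumes "category C"
    and "finitely_complete C"
    and "fibrational C \<Sigma>"
    and "sigma_maltsev C \<Sigma>"
    and "refl_rel C X r0 r1 rs"
    and "sigma_rel C \<Sigma> X t0 t1 ts"
    and "commutator_trivial C X r0 r1 rs t0 t1 ts"
    and "refl_rel C X r0' r1' rs'"
    and "subrel C r0' r1' r0 r1"
  shows "commutator_trivial C X r0' r1' rs' t0 t1 ts"
  using commutator_trivial_subrel[OF assms(1,2,5) _ assms(7-9)] assms(6)
  unfolding sigma_rel_def by blast

end
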